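(* If $T\in L_{aut}(\mathcal B)$ is a shifted hyperbolic operator, then $\overline{B(T)}$ is an infinite-dimensional closed subspace of $\mathcal B$ and it coincides with the shifted subspace $\Sigma$.
   Context: $\mathcal B$ is a Banach space. $T$ is generalized hyperbolic if there is a decomposition $\mathcal B=E^-\oplus E^+$ into complementary closed subspaces with $T(E^+)\subset E^+$, $T^{-1}(E^-)\subset E^-$, and $T|_{E^+}$, $T^{-1}|_{E^-}$ uniform contractions. $T$ is shifted hyperbolic if it is generalized hyperbolic and the transition subspace $E_0:=E^-\cap T^{-1}(E^+)$ is nonzero. The shifted subspace $\Sigma$ is the smallest closed subspace containing $E_0$ that is invariant under $T$ and $T^{-1}$ (the closure of the span of $\bigcup_{n\in\mathbb Z}T^n(E_0)$). The bounded set $B(T)$ is the set of $x$ for which there exist $K>0$ and strictly increasing sequences of positive integers $(k_n),(m_n)$ with $|T^{k_n}x|<K$ and $|T^{-m_n}x|<K$. *)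

theory Defs
  imports "HOL-Analysis.Analysis"
begin

definition L_aut :: "('a::banach \<Rightarrow> 'a) set" where
  "L_aut = {T. bounded_linear T \<and> bij T \<and> bounded_linear (inv T)}"

definition zpow :: "('a \<Rightarrow> 'a) \<Rightarrow> int \<Rightarrow> 'a \<Rightarrow> 'a" where
  "zpow T n = (if 0 \<le> n then T ^^ nat n else (inv T) ^^ nat (- n))"

definition uniform_contraction_on :: "'a::real_normed_vector set \<Rightarrow> ('a \<Rightarrow> 'a) \<Rightarrow> bool" where
  "uniform_contraction_on S f \<longleftrightarrow>
     (\<exists>C t. C > 0 \<and> 0 < t \<and> t < 1 \<and>
        (\<forall>x\<in>S. \<forall>n::nat. norm ((f ^^ n) x) \<le> C * t ^ n * norm x))"

definition generalized_hyperbolic_split :: "('a::banach \<Rightarrow> 'a) \<Rightarrow> 'a set \<Rightarrow> 'a set \<Rightarrow> bool" where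
  "generalized_hyperbolic_split T Em Ep \<longleftrightarrow>
     subspace Em \<and> subspace Ep \<and> closed Em \<and> closed Ep \<and>
     Em \<inter> Ep = {0} \<and> {x + y | x y. x \<in> Em \<and> y \<in> Ep} = UNIV \<and>
     T ` Ep \<subseteq> Ep \<and> inv T ` Em \<subseteq> Em \<and>
     uniform_contraction_on Ep T \<and> uniform_contraction_on Em (inv T)"

definition generalized_hyperbolic :: "('a::banach \<Rightarrow> 'a) \<Rightarrow> bool" where
  "generalized_hyperbolic T \<longleftrightarrow> (\<exists>Em Ep. generalized_hyperbolic_split T Em Ep)"

definition transition_subspace :: "('a::banach \<Rightarrow> 'a) \<Rightarrow> 'a set \<Rightarrow> 'a set \<Rightarrow> 'a set" where
  "transition_subspace T Em Ep = Em \<inter> inv T ` Ep"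

definition shifted_hyperbolic_split :: "('a::banach \<Rightarrow> 'a) \<Rightarrow> 'a set \<Rightarrow> 'a set \<Rightarrow> bool" where
  "shifted_hyperbolic_split T Em Ep \<longleftrightarrow>
     generalized_hyperbolic_split T Em Ep \<and> transition_subspace T Em Ep \<noteq> {0}"

definition shifted_subspace :: "('a::banach \<Rightarrow> 'a) \<Rightarrow> 'a set \<Rightarrow> 'a set \<Rightarrow> 'a set" where
  "shifted_subspace T Em Ep =
     closure (span (\<Union>n::int. zpow T n ` transition_subspace T Em Ep))"

definition bounded_set :: "('a::banach \<Rightarrow> 'a) \<Rightarrow> 'a set" where
  "bounded_set T = {x. \<exists>K>0. \<exists>k m :: nat \<Rightarrow> nat.
      strict_mono k \<and> strict_mono m \<and> (\<forall>n. 0 < k n \<and> 0 < m n) \<and>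
      (\<forall>n. norm ((T ^^ k n) x) < K \<and> norm ((inv T ^^ m n) x) < K)}"

end

theory Submission
  imports Defs
begin

text \<open>Vectors of the transition subspace \<open>E\<^sub>0\<close> have forward orbits tending to \<open>0\<close>
  (since \<open>T e \<in> E\<^sup>+\<close>) and backward orbits tending to \<open>0\<close> (since \<open>e \<in> E\<^sup>-\<close>); this property
  survives \<open>T\<close>, \<open>T\<^sup>-\<^sup>1\<close> and linear combinations, so \<open>\<Sigma>\<close> lies in the closure of \<open>B(T)\<close>.
  Conversely, write \<open>x \<in> B(T)\<close> as \<open>u + v\<close> with \<open>u \<in> E\<^sup>-\<close>, \<open>v \<in> E\<^sup>+\<close>. If \<open>T\<^sup>j x\<close> is bounded,
  so is \<open>T\<^sup>j u\<close>; subtracting from \<open>u\<close> the pull-back by \<open>T\<^sup>-\<^sup>j\<close> of the \<open>E\<^sup>-\<close>-part of a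
  bounded splitting of \<open>T\<^sup>j u\<close> gives a vector of \<open>E\<^sup>-\<close> that enters \<open>E\<^sup>+\<close> after \<open>j\<close> steps,
  hence lies in \<open>\<Sigma>\<close>, and is \<open>O(t\<^sup>j)\<close>-close to \<open>u\<close>; symmetrically for \<open>v\<close>. Bounded
  splittings exist by Baire's theorem. Finally, for \<open>0 \<noteq> e \<in> E\<^sub>0\<close> the vectors
  \<open>e, T e, T\<^sup>2 e, \<dots>\<close> are independent, because \<open>T\<^sup>i e \<in> E\<^sup>+\<close> for \<open>i \<ge> 1\<close> while \<open>e \<notin> E\<^sup>+\<close>.\<close>

section \<open>Bounded splittings along complemented closed subspaces\<close>

definition bounded_split_set :: "'a::real_normed_vector set \<Rightarrow> 'a set \<Rightarrow> real \<Rightarrow> 'a set" where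
  "bounded_split_set Em Ep c = {y. \<exists>a\<in>Em. y - a \<in> Ep \<and> norm a \<le> c}"

lemma bounded_split_set_diff:
  assumes "subspace Em" "subspace Ep"
    and "y \<in> bounded_split_set Em Ep c" "z \<in> bounded_split_set Em Ep d"
  shows "y - z \<in> bounded_split_set Em Ep (c + d)"
proof -
  obtain a b where ab: "a \<in> Em" "y - a \<in> Ep" "norm a \<le> c" "b \<in> Em" "z - b \<in> Ep" "norm b \<le> d"
    using assms(3,4) by (auto simp: bounded_split_set_def)
  have "(y - a) - (z - b) \<in> Ep"
    using ab assms(2) by (simp add: subspace_diff)
  moreover have "(y - a) - (z - b) = (y - z) - (a - b)"
    by (simp add: algebra_simps)
  moreover have "a - b \<in> Em" "norm (a - b) \<le> c + d"
    using ab assms(1) norm_triangle_ineq4[of a b] by (auto simp: subspace_diff)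
  ultimately show ?thesis
    unfolding bounded_split_set_def by auto
qed

lemma bounded_split_set_scaleR:
  assumes "subspace Em" "subspace Ep" "y \<in> bounded_split_set Em Ep c"
  shows "r *\<^sub>R y \<in> bounded_split_set Em Ep (\<bar>r\<bar> * c)"
proof -
  obtain a where a: "a \<in> Em" "y - a \<in> Ep" "norm a \<le> c"
    using assms(3) by (auto simp: bounded_split_set_def)
  have "r *\<^sub>R a \<in> Em" "r *\<^sub>R y - r *\<^sub>R a \<in> Ep"
    using subspace_scale[OF assms(1) a(1)] subspace_scale[OF assms(2) a(2), of r]
    by (simp_all add: scaleR_diff_right)
  moreover have "norm (r *\<^sub>R a) \<le> \<bar>r\<bar> * c"
    using a(3) by (simp add: mult_left_mono)
  ultimately show ?thesis
    unfolding bounded_split_set_def by blast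
qed

lemma closure_bounded_split_set_diff:
  assumes "subspace Em" "subspace Ep"
    and "y \<in> closure (bounded_split_set Em Ep c)" "z \<in> closure (bounded_split_set Em Ep d)"
  shows "y - z \<in> closure (bounded_split_set Em Ep (c + d))"
proof -
  from assms(3) obtain f where "\<And>n. f n \<in> bounded_split_set Em Ep c" "f \<longlonglongrightarrow> y"
    unfolding closure_sequential by blast
  moreover from assms(4) obtain g where "\<And>n. g n \<in> bounded_split_set Em Ep d" "g \<longlonglongrightarrow> z"
    unfolding closure_sequential by blast
  ultimately show ?thesis
    unfolding closure_sequential
    by (intro exI[of _ "\<lambda>n. f n - g n"])
      (auto intro: tendsto_diff bounded_split_set_diff[OF assms(1,2)])
qed

lemma closure_bounded_split_set_scaleR:
  assumes "subspace Em" "subspace Ep" "y \<in> closure (bounded_split_set Em Ep c)"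
  shows "r *\<^sub>R y \<in> closure (bounded_split_set Em Ep (\<bar>r\<bar> * c))"
proof -
  from assms(3) obtain f where "\<And>n. f n \<in> bounded_split_set Em Ep c" "f \<longlonglongrightarrow> y"
    unfolding closure_sequential by blast
  then show ?thesis
    unfolding closure_sequential
    by (intro exI[of _ "\<lambda>n. r *\<^sub>R f n"])
      (auto intro: tendsto_scaleR bounded_split_set_scaleR[OF assms(1,2)])
qed

lemma bounded_split_set_zero:
  assumes "subspace Em" "subspace Ep"
  shows "0 \<in> bounded_split_set Em Ep 0"
  using assms by (auto simp: bounded_split_set_def subspace_0 intro!: bexI[of _ 0])

text \<open>Baire: the closed sets \<open>closure (bounded_split_set Em Ep n)\<close>, \<open>n \<in> \<nat>\<close>,
  cover the space.\<close>
lemma bounded_split_set_ball_in_closure: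
  fixes Em Ep :: "'a::banach set"
  assumes "\<And>y. \<exists>a\<in>Em. y - a \<in> Ep"
  obtains c y0 r where "c \<ge> 0" "r > 0" "ball y0 r \<subseteq> closure (bounded_split_set Em Ep c)"
proof -
  let ?A = "\<lambda>n::nat. closure (bounded_split_set Em Ep (real n))"
  have "y \<in> \<Union>(range ?A)" for y
  proof -
    obtain a where "a \<in> Em" "y - a \<in> Ep"
      using assms by blast
    moreover obtain n :: nat where "norm a \<le> real n"
      using real_arch_simple by blast
    ultimately have "y \<in> bounded_split_set Em Ep (real n)"
      unfolding bounded_split_set_def by blast
    then show ?thesis
      using closure_subset by blast
  qed
  then have cover: "\<Union>(range ?A) = UNIV"
    by blast
  have "\<exists>n. interior (?A n) \<noteq> {}"
  proof (rule ccontr)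
    assume "\<nexists>n. interior (?A n) \<noteq> {}"
    then have "euclidean interior_of \<Union>(range ?A) = {}"
      by (intro Baire_category_alt)
        (auto simp: completely_metrizable_space_euclidean closed_closedin[symmetric])
    then show False
      using cover by simp
  qed
  then obtain n y0 where "y0 \<in> interior (?A n)"
    by blast
  then obtain r where "r > 0" "ball y0 r \<subseteq> ?A n"
    by (meson open_contains_ball interior_subset open_interior subset_trans)
  then show thesis
    using that[of "real n" r y0] by simp
qed

lemma bounded_split_set_dense:
  fixes Em Ep :: "'a::banach set"
  assumes "subspace Em" "subspace Ep" "\<And>y. \<exists>a\<in>Em. y - a \<in> Ep"
  obtains M where "M \<ge> 0" "\<And>y. y \<in> closure (bounded_split_set Em Ep (M * norm y))"
proof -
  obtain c y0 r where c: "c \<ge> 0" and r: "r > 0"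
    and ball: "ball y0 r \<subseteq> closure (bounded_split_set Em Ep c)"
    by (rule bounded_split_set_ball_in_closure[OF assms(3)])
  have small: "z \<in> closure (bounded_split_set Em Ep (2 * c))" if "norm z < r" for z
  proof -
    have "y0 + z \<in> ball y0 r" "y0 \<in> ball y0 r"
      using r that by (simp_all add: dist_norm)
    then have "y0 + z \<in> closure (bounded_split_set Em Ep c)" "y0 \<in> closure (bounded_split_set Em Ep c)"
      using ball by blast+
    from closure_bounded_split_set_diff[OF assms(1,2) this] show ?thesis
      by simp
  qed
  have dense: "y \<in> closure (bounded_split_set Em Ep (4 * c / r * norm y))" for y
  proof (cases "y = 0")
    case True
    then show ?thesis
      using bounded_split_set_zero[OF assms(1,2)] closure_subset by auto
  next
    case False
    define s where "s = 2 * norm y / r"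
    have s: "s > 0"
      using False r by (simp add: s_def)
    have "norm (inverse s *\<^sub>R y) < r"
      using False r by (simp add: s_def)
    then have "s *\<^sub>R (inverse s *\<^sub>R y) \<in> closure (bounded_split_set Em Ep (\<bar>s\<bar> * (2 * c)))"
      using small closure_bounded_split_set_scaleR[OF assms(1,2)] by blast
    moreover have "\<bar>s\<bar> * (2 * c) = 4 * c / r * norm y"
      unfolding s_def using r by (simp add: field_simps)
    ultimately show ?thesis
      using s by simp
  qed
  show thesis
    by (rule that[of "4 * c / r", OF _ dense]) (use c r in simp)
qed

lemma bounded_split_set_series:
  fixes Em Ep :: "'a::banach set"
  assumes "subspace Em" "subspace Ep" "closed Em" "closed Ep"
    and b: "\<And>k. b k \<in> Em" and wb: "\<And>k. w k - b k \<in> Ep"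
    and w: "(\<lambda>n. \<Sum>k<n. w k) \<longlonglongrightarrow> y"
    and g: "\<And>k. norm (b k) \<le> g k" "summable g"
  shows "y \<in> bounded_split_set Em Ep (suminf g)"
proof -
  have norm_summable: "summable (\<lambda>k. norm (b k))"
    using g(1) by (intro summable_comparison_test'[OF g(2)]) simp
  then have b_sums: "(\<lambda>n. \<Sum>k<n. b k) \<longlonglongrightarrow> suminf b"
    by (rule summable_LIMSEQ[OF summable_norm_cancel])
  have "suminf b \<in> Em"
    by (rule closed_sequentially[OF assms(3) _ b_sums]) (use assms(1) b in \<open>auto intro: subspace_sum\<close>)
  moreover have Ep_sums: "(\<lambda>n. \<Sum>k<n. w k - b k) \<longlonglongrightarrow> y - suminf b"
    unfolding sum_subtractf by (intro tendsto_diff w b_sums)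
  have "y - suminf b \<in> Ep"
    by (rule closed_sequentially[OF assms(4) _ Ep_sums]) (use assms(2) wb in \<open>auto intro: subspace_sum\<close>)
  moreover have "norm (suminf b) \<le> suminf g"
    using summable_norm[OF norm_summable] suminf_le[OF g(1) norm_summable g(2)] by linarith
  ultimately show ?thesis
    unfolding bounded_split_set_def by blast
qed

lemma bounded_split_set_approximating_series:
  fixes Em Ep :: "'a::banach set"
  assumes "M \<ge> 0" "y \<noteq> 0"
    and approx: "\<And>r. r \<in> closure (bounded_split_set Em Ep (M * norm r))"
  obtains b w where "\<And>k. b k \<in> Em" "\<And>k. w k - b k \<in> Ep"
    "\<And>k. norm (b k) \<le> M * norm y * (1/2) ^ k" "(\<lambda>n. \<Sum>k<n. w k) \<longlonglongrightarrow> y"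
proof -
  have "\<exists>w. w \<in> bounded_split_set Em Ep (M * norm r) \<and> dist w r < norm y * (1/2) ^ Suc k"
    for r k
  proof -
    have "norm y * (1/2) ^ Suc k > 0"
      using assms(2) by simp
    then show ?thesis
      using approx[of r] unfolding closure_approachable by blast
  qed
  then obtain F where F: "\<And>r k. F r k \<in> bounded_split_set Em Ep (M * norm r)"
    "\<And>r k. dist (F r k) r < norm y * (1/2) ^ Suc k"
    by metis
  define R where "R = rec_nat y (\<lambda>k r. r - F r k)"
  have R_0: "R 0 = y" and R_Suc: "R (Suc k) = R k - F (R k) k" for k
    by (simp_all add: R_def)
  have R_bound: "norm (R k) \<le> norm y * (1/2) ^ k" for k
  proof (cases k)
    case (Suc j)
    then show ?thesis
      using F(2)[of "R j" j] R_Suc[of j] by (simp add: dist_norm norm_minus_commute)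
  qed (simp add: R_0)
  define w where "w k = F (R k) k" for k
  have "\<exists>a\<in>Em. w k - a \<in> Ep \<and> norm a \<le> M * norm (R k)" for k
    using F(1) unfolding w_def bounded_split_set_def by blast
  then obtain b where b: "\<And>k. b k \<in> Em" "\<And>k. w k - b k \<in> Ep" "\<And>k. norm (b k) \<le> M * norm (R k)"
    by metis
  have b_bound: "norm (b k) \<le> M * norm y * (1/2) ^ k" for k
    using order_trans[OF b(3) mult_left_mono[OF R_bound assms(1)]] by (simp add: mult.assoc)
  have w_sums: "(\<lambda>n. \<Sum>k<n. w k) \<longlonglongrightarrow> y"
  proof -
    have partial_sums: "(\<Sum>k<n. w k) = y - R n" for n
      by (induction n) (simp_all add: R_0 R_Suc w_def)
    have geometric: "(\<lambda>n. norm y * (1/2::real) ^ n) \<longlonglongrightarrow> 0"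
      by (intro tendsto_mult_right_zero LIMSEQ_realpow_zero) simp_all
    have "R \<longlonglongrightarrow> 0"
      by (rule Lim_null_comparison[OF always_eventually geometric]) (use R_bound in simp)
    then have "(\<lambda>n. y - R n) \<longlonglongrightarrow> y - 0"
      by (intro tendsto_diff tendsto_const)
    then show ?thesis
      by (simp add: partial_sums)
  qed
  show thesis
    by (rule that[OF b(1,2) b_bound w_sums])
qed

text \<open>A bounded projection onto \<open>Em\<close> along \<open>Ep\<close>, obtained as in the proof of the open
  mapping theorem: Baire gives approximate splittings with linear bounds, and a geometric
  series of corrections makes them exact.\<close>
lemma complemented_subspaces_bounded_split:
  fixes Em Ep :: "'a::banach set"
  assumes "subspace Em" "subspace Ep" "closed Em" "closed Ep" "\<And>y. \<exists>a\<in>Em. y - a \<in> Ep"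
  obtains M where "M \<ge> 0" "\<And>y. y \<in> bounded_split_set Em Ep (M * norm y)"
proof -
  obtain M where M: "M \<ge> 0" "\<And>y. y \<in> closure (bounded_split_set Em Ep (M * norm y))"
    using bounded_split_set_dense[OF assms(1,2,5)] by auto
  have "y \<in> bounded_split_set Em Ep (2 * M * norm y)" for y
  proof (cases "y = 0")
    case True
    then show ?thesis
      using bounded_split_set_zero[OF assms(1,2)] by simp
  next
    case False
    obtain b w where wb: "\<And>k. b k \<in> Em" "\<And>k. w k - b k \<in> Ep"
      "\<And>k. norm (b k) \<le> M * norm y * (1/2) ^ k" "(\<lambda>n. \<Sum>k<n. w k) \<longlonglongrightarrow> y"
      using bounded_split_set_approximating_series[OF M(1) False M(2)] by blast
    have "(\<lambda>k. M * norm y * (1/2::real) ^ k) sums (M * norm y * 2)"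
      using sums_mult[OF geometric_sums[of "1/2::real"], of "M * norm y"] by simp
    then have "summable (\<lambda>k. M * norm y * (1/2::real) ^ k)"
      and "(\<Sum>k. M * norm y * (1/2::real) ^ k) = 2 * M * norm y"
      by (auto simp: sums_iff)
    with bounded_split_set_series[OF assms(1-4) wb(1,2,4,3)] show ?thesis
      by metis
  qed
  with M(1) show thesis
    by (intro that[of "2 * M"]) simp_all
qed

lemma subspace_closure:
  fixes X :: "'a::real_normed_vector set"
  assumes "subspace X"
  shows "subspace (closure X)"
proof -
  have "0 \<in> closure X"
    by (rule subsetD[OF closure_subset subspace_0[OF assms]])
  moreover have "x + y \<in> closure X" if "x \<in> closure X" "y \<in> closure X" for x y
  proof -
    from that(1) obtain f where "\<And>n. f n \<in> X" "f \<longlonglongrightarrow> x"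
      unfolding closure_sequential by blast
    moreover from that(2) obtain g where "\<And>n. g n \<in> X" "g \<longlonglongrightarrow> y"
      unfolding closure_sequential by blast
    ultimately show ?thesis
      unfolding closure_sequential using assms
      by (intro exI[of _ "\<lambda>n. f n + g n"]) (auto intro: tendsto_add subspace_add)
  qed
  moreover have "c *\<^sub>R x \<in> closure X" if "x \<in> closure X" for c x
  proof -
    from that obtain f where "\<And>n. f n \<in> X" "f \<longlonglongrightarrow> x"
      unfolding closure_sequential by blast
    then show ?thesis
      unfolding closure_sequential using assms
      by (intro exI[of _ "\<lambda>n. c *\<^sub>R f n"]) (auto intro: tendsto_scaleR subspace_scale)
  qed
  ultimately show ?thesis
    by (simp add: subspace_def)
qed

lemma linear_funpow:
  fixes f :: "'a::real_vector \<Rightarrow> 'a"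
  assumes "linear f"
  shows "linear (f ^^ n)"
proof (induction n)
  case 0
  show ?case
    by (simp only: funpow.simps(1) linear_id)
next
  case (Suc n)
  show ?case
    using linear_compose[OF Suc assms] by (simp only: funpow.simps(2))
qed

lemma funpow_inv_cancel:
  fixes f :: "'a \<Rightarrow> 'a"
  assumes "bij f"
  shows "(f ^^ k) ((inv f ^^ k) x) = x"
  by (induction k arbitrary: x) (simp_all add: funpow_swap1[of "inv f"] assms bij_is_surj surj_f_inv_f)

lemma zpow_apply:
  assumes "bij T"
  shows "T (zpow T n x) = zpow T (n + 1) x"
proof (cases "n \<ge> 0")
  case True
  then have "nat (n + 1) = Suc (nat n)"
    by simp
  with True show ?thesis
    by (simp add: zpow_def)
next
  case False
  then have "nat (- n) = Suc (nat (- (n + 1)))"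
    by simp
  with False assms show ?thesis
    by (auto simp: zpow_def bij_is_surj surj_f_inv_f)
qed

lemma inv_zpow_apply:
  assumes "bij T"
  shows "inv T (zpow T n x) = zpow T (n - 1) x"
  using zpow_apply[OF assms, of "n - 1" x] inv_f_f[OF bij_is_inj[OF assms]] by (metis diff_add_cancel)

lemma zpow_closed:
  assumes "\<And>x. x \<in> X \<Longrightarrow> T x \<in> X" "\<And>x. x \<in> X \<Longrightarrow> inv T x \<in> X" "x \<in> X"
  shows "zpow T n x \<in> X"
proof -
  have "(T ^^ k) x \<in> X" "(inv T ^^ k) x \<in> X" for k
    by (induction k) (simp_all add: assms)
  then show ?thesis
    by (simp add: zpow_def)
qed

lemma uniform_contraction_on_bounded:
  assumes "uniform_contraction_on E f"
  obtains C where "C > 0" "\<And>x n. x \<in> E \<Longrightarrow> norm ((f ^^ n) x) \<le> C * norm x"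
proof -
  obtain C t where C: "C > 0" "0 < t" "t < 1"
    and bound: "\<And>x n. x \<in> E \<Longrightarrow> norm ((f ^^ n) x) \<le> C * t ^ n * norm x"
    using assms unfolding uniform_contraction_on_def by blast
  have "t ^ n * norm x \<le> norm x" for n x
    using power_le_one[of t n] C by (simp add: mult_left_le_one_le)
  then have "C * t ^ n * norm x \<le> C * norm x" for n x
    using C(1) by (simp add: mult.assoc)
  then show thesis
    using that[OF C(1)] bound order_trans by blast
qed

lemma closure_approximation_geometric:
  fixes t :: real and k :: "nat \<Rightarrow> nat"
  assumes "strict_mono k" "0 \<le> t" "t < 1"
    and "\<And>n. s n \<in> S" "\<And>n. norm (s n - u) \<le> c * t ^ k n"
  shows "u \<in> closure S"
proof -
  have "(\<lambda>n. t ^ n) \<longlonglongrightarrow> 0"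
    using assms(2,3) by (intro LIMSEQ_realpow_zero)
  from LIMSEQ_subseq_LIMSEQ[OF this assms(1)] have bound: "(\<lambda>n. c * t ^ k n) \<longlonglongrightarrow> 0"
    by (intro tendsto_mult_right_zero) (simp add: o_def)
  have "(\<lambda>n. s n - u) \<longlonglongrightarrow> 0"
    by (rule Lim_null_comparison[OF always_eventually bound]) (use assms(5) in simp)
  then have "s \<longlonglongrightarrow> u"
    by (rule LIM_zero_cancel)
  with assms(4) show ?thesis
    unfolding closure_sequential by blast
qed

definition stable_set :: "('a \<Rightarrow> 'a) \<Rightarrow> 'a::real_normed_vector set" where
  "stable_set f = {x. (\<lambda>n. (f ^^ n) x) \<longlonglongrightarrow> 0}"

lemma stable_set_apply_iff: "f x \<in> stable_set f \<longleftrightarrow> x \<in> stable_set f"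
  using filterlim_sequentially_Suc[of "\<lambda>n. (f ^^ n) x"]
  by (simp add: stable_set_def funpow_swap1)

lemma subspace_stable_set:
  assumes "linear f"
  shows "subspace (stable_set f)"
proof -
  have "(f ^^ n) 0 = 0" "(f ^^ n) (x + y) = (f ^^ n) x + (f ^^ n) y"
    "(f ^^ n) (c *\<^sub>R x) = c *\<^sub>R (f ^^ n) x" for n x y c
    using linear_funpow[OF assms, of n] by (simp_all add: linear_0 linear_add linear_scale)
  then show ?thesis
    unfolding subspace_def stable_set_def
    by (auto intro: tendsto_add_zero tendsto_scaleR[THEN tendsto_eq_rhs])
qed

lemma uniform_contraction_on_stable_set:
  assumes "uniform_contraction_on E f"
  shows "E \<subseteq> stable_set f"
proof
  fix x
  assume "x \<in> E"
  obtain C t where C: "C > 0" "0 < t" "t < 1"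
    and bound: "\<And>n. norm ((f ^^ n) x) \<le> C * t ^ n * norm x"
    using assms \<open>x \<in> E\<close> unfolding uniform_contraction_on_def by blast
  have "(\<lambda>n. C * t ^ n * norm x) \<longlonglongrightarrow> C * 0 * norm x"
    using C by (intro tendsto_intros LIMSEQ_realpow_zero) simp_all
  then have geometric: "(\<lambda>n. C * t ^ n * norm x) \<longlonglongrightarrow> 0"
    by simp
  have "(\<lambda>n. (f ^^ n) x) \<longlonglongrightarrow> 0"
    by (rule Lim_null_comparison[OF always_eventually geometric]) (use bound in simp)
  then show "x \<in> stable_set f"
    by (simp add: stable_set_def)
qed

lemma stable_sets_subset_bounded_set:
  "stable_set T \<inter> stable_set (inv T) \<subseteq> bounded_set T"
proof
  fix x
  assume "x \<in> stable_set T \<inter> stable_set (inv T)"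
  then have "Bseq (\<lambda>n. (T ^^ n) x)" "Bseq (\<lambda>n. (inv T ^^ n) x)"
    unfolding stable_set_def by (blast intro: convergent_imp_Bseq convergentI)+
  then obtain K1 K2 where K: "K1 > 0" "\<And>n. norm ((T ^^ n) x) \<le> K1"
    "K2 > 0" "\<And>n. norm ((inv T ^^ n) x) \<le> K2"
    unfolding Bseq_def by blast
  have "norm ((T ^^ Suc n) x) < K1 + K2 \<and> norm ((inv T ^^ Suc n) x) < K1 + K2" for n
    using K(2)[of "Suc n"] K(4)[of "Suc n"] K(1,3) by linarith
  moreover have "strict_mono Suc"
    by (simp add: strict_mono_def)
  ultimately show "x \<in> bounded_set T"
    unfolding bounded_set_def using K(1,3)
    by (intro CollectI exI[of _ "K1 + K2"] conjI exI[of _ Suc]) auto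
qed

lemma independent_orbit_segment:
  assumes "linear f" "inj f" "subspace E" "\<And>x. x \<in> E \<Longrightarrow> f x \<in> E" "f e \<in> E" "e \<notin> E"
  shows "independent ((\<lambda>i. (f ^^ i) e) ` {..<n}) \<and> card ((\<lambda>i. (f ^^ i) e) ` {..<n}) = n"
proof (induction n)
  case 0
  show ?case
    by (simp add: independent_empty)
next
  case (Suc n)
  let ?O = "(\<lambda>i. (f ^^ i) e) ` {..<n}"
  have orbit_Suc: "(\<lambda>i. (f ^^ i) e) ` {..<Suc n} = insert e (f ` ?O)"
    by (simp add: lessThan_Suc_eq_insert_0 image_image)
  have "(f ^^ i) (f e) \<in> E" for i
    by (induction i) (simp_all add: assms(4,5))
  then have "f ` ?O \<subseteq> E"
    by (auto simp: funpow_swap1)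
  then have e_notin: "e \<notin> span (f ` ?O)"
    using assms(3,6) span_minimal by blast
  have "independent (f ` ?O)"
    using linear_independent_injective_image[OF assms(1)] Suc.IH
      inj_on_subset[OF assms(2) subset_UNIV] by blast
  moreover have "card (insert e (f ` ?O)) = Suc n"
  proof -
    have "e \<notin> f ` ?O"
      using e_notin span_base[of e "f ` ?O"] by blast
    moreover have "card (f ` ?O) = n"
      using Suc.IH card_image[OF inj_on_subset[OF assms(2) subset_UNIV], of ?O] by simp
    ultimately show ?thesis
      by simp
  qed
  ultimately show ?case
    unfolding orbit_Suc using e_notin by (simp add: independent_insertI)
qed

section \<open>Shifted hyperbolic operators\<close>

locale shifted_hyperbolic_operator =
  fixes T :: "'a::banach \<Rightarrow> 'a" and Em Ep :: "'a set"
  assumes automorphism: "T \<in> L_aut"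
    and split: "shifted_hyperbolic_split T Em Ep"
begin

lemma linear_T: "linear T" and linear_inv_T: "linear (inv T)" and bij_T: "bij T"
  using automorphism by (auto simp: L_aut_def bounded_linear.linear)

lemma T_inv_T [simp]: "T (inv T x) = x" and inv_T_T [simp]: "inv T (T x) = x"
  using bij_T by (simp_all add: bij_is_surj surj_f_inv_f bij_is_inj inv_f_f)

lemma subspace_Em: "subspace Em" and subspace_Ep: "subspace Ep"
  and closed_Em: "closed Em" and closed_Ep: "closed Ep"
  and Em_Int_Ep: "Em \<inter> Ep = {0}"
  and T_Ep: "x \<in> Ep \<Longrightarrow> T x \<in> Ep" and inv_T_Em: "x \<in> Em \<Longrightarrow> inv T x \<in> Em"
  and contraction_Ep: "uniform_contraction_on Ep T"
  and contraction_Em: "uniform_contraction_on Em (inv T)"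
  and transition_subspace_nontrivial: "transition_subspace T Em Ep \<noteq> {0}"
  using split by (auto simp: shifted_hyperbolic_split_def generalized_hyperbolic_split_def)

lemma Em_Ep_split: "\<exists>a\<in>Em. y - a \<in> Ep"
proof -
  have "y \<in> {a + b | a b. a \<in> Em \<and> b \<in> Ep}"
    using split by (simp add: shifted_hyperbolic_split_def generalized_hyperbolic_split_def)
  then show ?thesis
    by force
qed

lemma funpow_T_Ep: "x \<in> Ep \<Longrightarrow> (T ^^ k) x \<in> Ep"
  by (induction k) (simp_all add: T_Ep)

lemma funpow_inv_T_Em: "x \<in> Em \<Longrightarrow> (inv T ^^ k) x \<in> Em"
  by (induction k) (simp_all add: inv_T_Em)

lemma transition_subspace_iff: "e \<in> transition_subspace T Em Ep \<longleftrightarrow> e \<in> Em \<and> T e \<in> Ep"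
  unfolding transition_subspace_def by (metis IntE IntI image_eqI inv_T_T imageE T_inv_T)

definition shifted_span :: "'a set" where
  "shifted_span = span (\<Union>n. zpow T n ` transition_subspace T Em Ep)"

lemma shifted_subspace_eq: "shifted_subspace T Em Ep = closure shifted_span"
  by (simp add: shifted_subspace_def shifted_span_def)

lemma transition_subspace_subset_shifted_span: "transition_subspace T Em Ep \<subseteq> shifted_span"
proof
  fix e
  assume "e \<in> transition_subspace T Em Ep"
  then have "zpow T 0 e \<in> (\<Union>n. zpow T n ` transition_subspace T Em Ep)"
    by blast
  then show "e \<in> shifted_span"
    unfolding shifted_span_def by (simp add: zpow_def span_base)
qed

lemma shifted_span_invariant:
  assumes "x \<in> shifted_span"
  shows "T x \<in> shifted_span" and "inv T x \<in> shifted_span"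
proof -
  let ?X = "\<Union>n. zpow T n ` transition_subspace T Em Ep"
  have "T ` ?X \<subseteq> ?X" "inv T ` ?X \<subseteq> ?X"
    using zpow_apply[OF bij_T] inv_zpow_apply[OF bij_T] by blast+
  then have "T ` shifted_span \<subseteq> shifted_span" "inv T ` shifted_span \<subseteq> shifted_span"
    unfolding shifted_span_def
    by (simp_all add: linear_span_image[OF linear_T, symmetric]
        linear_span_image[OF linear_inv_T, symmetric] span_mono)
  with assms show "T x \<in> shifted_span" "inv T x \<in> shifted_span"
    by blast+
qed

lemma funpow_T_shifted_span: "x \<in> shifted_span \<Longrightarrow> (T ^^ k) x \<in> shifted_span"
  by (induction k) (simp_all add: shifted_span_invariant)

text \<open>Writing \<open>T w = a + b\<close> with \<open>a \<in> Em\<close>, \<open>b \<in> Ep\<close>, the vector \<open>a\<close> reaches \<open>Ep\<close> one step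
  earlier than \<open>w\<close>, while \<open>inv T b = w - inv T a\<close> lies in the transition subspace.\<close>
lemma in_shifted_span_if_funpow_in_Ep:
  assumes "w \<in> Em" "(T ^^ k) w \<in> Ep"
  shows "w \<in> shifted_span"
  using assms
proof (induction k arbitrary: w)
  case 0
  then have "w = 0"
    using Em_Int_Ep by auto
  then show ?case
    by (simp add: shifted_span_def span_zero)
next
  case (Suc k)
  obtain a where a: "a \<in> Em" "T w - a \<in> Ep"
    using Em_Ep_split by blast
  define b where "b = T w - a"
  have "(T ^^ k) a = (T ^^ k) (T w) - (T ^^ k) b"
    using linear_diff[OF linear_funpow[OF linear_T]] by (simp add: b_def)
  moreover have "(T ^^ k) (T w) \<in> Ep"
    using Suc.prems(2) by (simp add: funpow_swap1)
  ultimately have "(T ^^ k) a \<in> Ep"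
    using funpow_T_Ep[OF a(2)[folded b_def]] subspace_Ep by (simp add: subspace_diff)
  then have a_shifted: "a \<in> shifted_span"
    using Suc.IH a(1) by blast
  have inv_b: "inv T b = w - inv T a"
    using linear_diff[OF linear_inv_T] by (simp add: b_def)
  then have "inv T b \<in> Em"
    using Suc.prems(1) inv_T_Em[OF a(1)] subspace_Em by (simp add: subspace_diff)
  moreover have "T (inv T b) \<in> Ep"
    using a(2) by (simp add: b_def)
  ultimately have "inv T b \<in> shifted_span"
    using transition_subspace_iff transition_subspace_subset_shifted_span by blast
  moreover have "w = inv T a + inv T b"
    using inv_b by simp
  ultimately show ?case
    using shifted_span_invariant(2)[OF a_shifted] subspace_span
    by (metis shifted_span_def subspace_add)
qed

lemma shifted_span_subset_bounded_set: "shifted_span \<subseteq> bounded_set T"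
proof -
  let ?V = "stable_set T \<inter> stable_set (inv T)"
  have invariant: "T x \<in> ?V" "inv T x \<in> ?V" if "x \<in> ?V" for x
    using that stable_set_apply_iff[of T] stable_set_apply_iff[of "inv T"] by (metis IntI IntE T_inv_T inv_T_T)+
  have "transition_subspace T Em Ep \<subseteq> ?V"
  proof
    fix e
    assume "e \<in> transition_subspace T Em Ep"
    then have "e \<in> Em" "T e \<in> Ep"
      by (simp_all add: transition_subspace_iff)
    then show "e \<in> ?V"
      using uniform_contraction_on_stable_set[OF contraction_Em]
        uniform_contraction_on_stable_set[OF contraction_Ep] stable_set_apply_iff[of T e] by blast
  qed
  then have "(\<Union>n. zpow T n ` transition_subspace T Em Ep) \<subseteq> ?V"
    using zpow_closed[of ?V T, OF invariant] by blast
  then have "shifted_span \<subseteq> ?V"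
    unfolding shifted_span_def
    by (intro span_minimal subspace_inter subspace_stable_set linear_T linear_inv_T)
  then show ?thesis
    using stable_sets_subset_bounded_set by blast
qed

lemma bounded_split:
  obtains M where "M \<ge> 0" "\<And>y. y \<in> bounded_split_set Em Ep (M * norm y)"
  using complemented_subspaces_bounded_split[OF subspace_Em subspace_Ep closed_Em closed_Ep Em_Ep_split]
  by blast

lemma Em_shifted_span_approximation:
  assumes u: "u \<in> Em" and K: "norm ((T ^^ j) u) \<le> K"
    and M: "M \<ge> 0" "\<And>y. y \<in> bounded_split_set Em Ep (M * norm y)"
    and contraction: "\<And>x n. x \<in> Em \<Longrightarrow> norm ((inv T ^^ n) x) \<le> C * t ^ n * norm x"
    and "C \<ge> 0" "t \<ge> 0"
  shows "\<exists>s\<in>shifted_span. norm (s - u) \<le> C * (M * K) * t ^ j"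
proof -
  obtain a where a: "a \<in> Em" "(T ^^ j) u - a \<in> Ep" "norm a \<le> M * norm ((T ^^ j) u)"
    using M(2) unfolding bounded_split_set_def by blast
  define s where "s = u - (inv T ^^ j) a"
  have "s \<in> Em"
    using u funpow_inv_T_Em[OF a(1)] subspace_Em by (simp add: s_def subspace_diff)
  moreover have "(T ^^ j) s = (T ^^ j) u - a"
    using linear_diff[OF linear_funpow[OF linear_T]] funpow_inv_cancel[OF bij_T] by (simp add: s_def)
  ultimately have "s \<in> shifted_span"
    using a(2) in_shifted_span_if_funpow_in_Ep by metis
  moreover have "norm (s - u) \<le> C * (M * K) * t ^ j"
  proof -
    have "norm (s - u) = norm ((inv T ^^ j) a)"
      by (simp add: s_def)
    also have "\<dots> \<le> C * t ^ j * norm a"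
      using contraction a(1) by blast
    also have "\<dots> \<le> C * t ^ j * (M * K)"
      using assms(6,7) order_trans[OF a(3) mult_left_mono[OF K M(1)]] by (intro mult_left_mono) auto
    finally show ?thesis
      by (simp add: mult_ac)
  qed
  ultimately show ?thesis
    by blast
qed

lemma Ep_shifted_span_approximation:
  assumes v: "v \<in> Ep" and K: "norm ((inv T ^^ j) v) \<le> K"
    and M: "M \<ge> 0" "\<And>y. y \<in> bounded_split_set Em Ep (M * norm y)"
    and contraction: "\<And>x n. x \<in> Ep \<Longrightarrow> norm ((T ^^ n) x) \<le> C * t ^ n * norm x"
    and "C \<ge> 0" "t \<ge> 0"
  shows "\<exists>s\<in>shifted_span. norm (s - v) \<le> C * ((1 + M) * K) * t ^ j"
proof -
  let ?y = "(inv T ^^ j) v"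
  obtain a where a: "a \<in> Em" "?y - a \<in> Ep" "norm a \<le> M * norm ?y"
    using M(2) unfolding bounded_split_set_def by blast
  define b where "b = ?y - a"
  have T_a: "(T ^^ j) a = v - (T ^^ j) b"
    using linear_diff[OF linear_funpow[OF linear_T]] funpow_inv_cancel[OF bij_T]
    by (simp add: b_def)
  then have "(T ^^ j) a \<in> Ep"
    using v funpow_T_Ep[OF a(2)[folded b_def]] subspace_Ep by (simp add: subspace_diff)
  then have "(T ^^ j) a \<in> shifted_span"
    using in_shifted_span_if_funpow_in_Ep[OF a(1)] funpow_T_shifted_span by blast
  moreover have "norm ((T ^^ j) a - v) \<le> C * ((1 + M) * K) * t ^ j"
  proof -
    have "norm b \<le> norm ?y + norm a"
      unfolding b_def by (rule norm_triangle_ineq4)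
    also have "\<dots> \<le> (1 + M) * K"
      using K order_trans[OF a(3) mult_left_mono[OF K M(1)]] by (simp add: algebra_simps)
    finally have b_bound: "norm b \<le> (1 + M) * K" .
    have "norm ((T ^^ j) a - v) = norm ((T ^^ j) b)"
      by (simp add: T_a)
    also have "\<dots> \<le> C * t ^ j * norm b"
      using contraction a(2) by (simp add: b_def)
    also have "\<dots> \<le> C * t ^ j * ((1 + M) * K)"
      using assms(6,7) b_bound by (intro mult_left_mono) auto
    finally show ?thesis
      by (simp add: mult_ac)
  qed
  ultimately show ?thesis
    by blast
qed

lemma Em_in_closure_shifted_span:
  fixes k :: "nat \<Rightarrow> nat"
  assumes u: "u \<in> Em" and k: "strict_mono k" and K: "\<And>n. norm ((T ^^ k n) u) \<le> K"
  shows "u \<in> closure shifted_span"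
proof -
  obtain C t where C: "C > 0" "0 < t" "t < 1"
    and contraction: "\<And>x n. x \<in> Em \<Longrightarrow> norm ((inv T ^^ n) x) \<le> C * t ^ n * norm x"
    using contraction_Em unfolding uniform_contraction_on_def by blast
  obtain M where M: "M \<ge> 0" "\<And>y. y \<in> bounded_split_set Em Ep (M * norm y)"
    using bounded_split by blast
  have "\<exists>s\<in>shifted_span. norm (s - u) \<le> C * (M * K) * t ^ k n" for n
    using Em_shifted_span_approximation[OF u K M contraction] C by simp
  then obtain s where "\<And>n. s n \<in> shifted_span" "\<And>n. norm (s n - u) \<le> C * (M * K) * t ^ k n"
    by metis
  with C show ?thesis
    by (intro closure_approximation_geometric[OF k]) auto
qed

lemma Ep_in_closure_shifted_span:
  fixes m :: "nat \<Rightarrow> nat"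
  assumes v: "v \<in> Ep" and m: "strict_mono m" and K: "\<And>n. norm ((inv T ^^ m n) v) \<le> K"
  shows "v \<in> closure shifted_span"
proof -
  obtain C t where C: "C > 0" "0 < t" "t < 1"
    and contraction: "\<And>x n. x \<in> Ep \<Longrightarrow> norm ((T ^^ n) x) \<le> C * t ^ n * norm x"
    using contraction_Ep unfolding uniform_contraction_on_def by blast
  obtain M where M: "M \<ge> 0" "\<And>y. y \<in> bounded_split_set Em Ep (M * norm y)"
    using bounded_split by blast
  have "\<exists>s\<in>shifted_span. norm (s - v) \<le> C * ((1 + M) * K) * t ^ m n" for n
    using Ep_shifted_span_approximation[OF v K M contraction] C by simp
  then obtain s where "\<And>n. s n \<in> shifted_span" "\<And>n. norm (s n - v) \<le> C * ((1 + M) * K) * t ^ m n"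
    by metis
  with C show ?thesis
    by (intro closure_approximation_geometric[OF m]) auto
qed

lemma bounded_set_subset_closure: "bounded_set T \<subseteq> closure shifted_span"
proof
  fix x
  assume "x \<in> bounded_set T"
  then obtain K and k m :: "nat \<Rightarrow> nat" where "strict_mono k" "strict_mono m"
    and K: "\<And>n. norm ((T ^^ k n) x) < K" "\<And>n. norm ((inv T ^^ m n) x) < K"
    unfolding bounded_set_def by blast
  obtain u where u: "u \<in> Em" "x - u \<in> Ep"
    using Em_Ep_split by blast
  obtain C1 where C1: "\<And>y n. y \<in> Ep \<Longrightarrow> norm ((T ^^ n) y) \<le> C1 * norm y"
    using uniform_contraction_on_bounded[OF contraction_Ep] by blast
  obtain C2 where C2: "\<And>y n. y \<in> Em \<Longrightarrow> norm ((inv T ^^ n) y) \<le> C2 * norm y"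
    using uniform_contraction_on_bounded[OF contraction_Em] by blast
  have "norm ((T ^^ k n) u) \<le> K + C1 * norm (x - u)" for n
  proof -
    have "(T ^^ k n) u = (T ^^ k n) x - (T ^^ k n) (x - u)"
      using linear_diff[OF linear_funpow[OF linear_T]] by simp
    then have "norm ((T ^^ k n) u) \<le> norm ((T ^^ k n) x) + norm ((T ^^ k n) (x - u))"
      by (metis norm_triangle_ineq4)
    then show ?thesis
      using K(1)[of n] C1[OF u(2), of "k n"] by linarith
  qed
  then have "u \<in> closure shifted_span"
    by (rule Em_in_closure_shifted_span[OF u(1) \<open>strict_mono k\<close>])
  moreover have "norm ((inv T ^^ m n) (x - u)) \<le> K + C2 * norm u" for n
  proof -
    have "(inv T ^^ m n) (x - u) = (inv T ^^ m n) x - (inv T ^^ m n) u"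
      using linear_diff[OF linear_funpow[OF linear_inv_T]] by simp
    then have "norm ((inv T ^^ m n) (x - u)) \<le> norm ((inv T ^^ m n) x) + norm ((inv T ^^ m n) u)"
      by (metis norm_triangle_ineq4)
    then show ?thesis
      using K(2)[of n] C2[OF u(1), of "m n"] by linarith
  qed
  then have "x - u \<in> closure shifted_span"
    by (rule Ep_in_closure_shifted_span[OF u(2) \<open>strict_mono m\<close>])
  ultimately have "u + (x - u) \<in> closure shifted_span"
    using subspace_closure[OF subspace_span] unfolding shifted_span_def by (blast intro: subspace_add)
  then show "x \<in> closure shifted_span"
    by simp
qed

lemma shifted_span_infinite_dimensional: "\<not> (\<exists>A. finite A \<and> closure shifted_span \<subseteq> span A)"
proof
  assume "\<exists>A. finite A \<and> closure shifted_span \<subseteq> span A"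
  then obtain A where A: "finite A" "closure shifted_span \<subseteq> span A"
    by blast
  have "0 \<in> transition_subspace T Em Ep"
    using subspace_0[OF subspace_Em] subspace_0[OF subspace_Ep] linear_0[OF linear_T]
    by (simp add: transition_subspace_iff)
  then obtain e where e: "e \<in> transition_subspace T Em Ep" "e \<noteq> 0"
    using transition_subspace_nontrivial by blast
  then have "e \<in> Em" "T e \<in> Ep"
    by (simp_all add: transition_subspace_iff)
  with e(2) have "e \<notin> Ep"
    using Em_Int_Ep by blast
  let ?O = "(\<lambda>i. (T ^^ i) e) ` {..<Suc (card A)}"
  have O: "independent ?O \<and> card ?O = Suc (card A)"
    using independent_orbit_segment[OF linear_T bij_is_inj[OF bij_T] subspace_Ep T_Ep
        \<open>T e \<in> Ep\<close> \<open>e \<notin> Ep\<close>] .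
  have "(T ^^ i) e \<in> shifted_span" for i
    using funpow_T_shifted_span transition_subspace_subset_shifted_span e(1) by blast
  then have "?O \<subseteq> span A"
    using A(2) closure_subset by blast
  with O have "card ?O \<le> card A"
    using independent_span_bound[OF A(1)] by blast
  with O show False
    by simp
qed

end

theorem theorem3:
  fixes T :: "'a::banach \<Rightarrow> 'a" and Em Ep :: "'a set"
  assumes "T \<in> L_aut"
    and "shifted_hyperbolic_split T Em Ep"
  shows "subspace (closure (bounded_set T)) \<and> closed (closure (bounded_set T))
    \<and> \<not> (\<exists>A. finite A \<and> closure (bounded_set T) \<subseteq> span A)
    \<and> closure (bounded_set T) = shifted_subspace T Em Ep"
proof -
  interpret shifted_hyperbolic_operator T Em Ep
    using assms by unfold_locales
  have "closure (bounded_set T) = closure shifted_span"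
    using closure_mono[OF shifted_span_subset_bounded_set]
      closure_minimal[OF bounded_set_subset_closure closed_closure] by blast
  then show ?thesis
    using subspace_closure[OF subspace_span] shifted_span_infinite_dimensional
    by (simp add: shifted_subspace_eq shifted_span_def)
qed

end
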